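(* Under Strategy 2B (described in the context), consider an attack cycle equal to H in the stationary sequence of i.i.d. attack cycles, and let $U'(H)$ be the number of uncles referred by its (honest) block. Then $$\mathbb{P}[U'(H)=1]=\sum_{i=2}^{n_1-2}\bigl(1-pq^2-pq^2C_{n_1-2-i}(pq)\bigr)\pi_i+\pi_{n_1-1}+\pi_{n_1},$$ $$\mathbb{P}[U'(H)=2]=\sum_{i+j\le n_1}\pi_i\pi_j,\qquad \mathbb{P}[U'(H)\ge3]=0.$$
   Context: Honest hashrate $p$, attacker hashrate $q$, $p+q=1$, $0<q<p$; $\gamma\in[0,1]$ is the fraction of honest hashrate mining on the attacker's block during a public competition between equal-height blocks. Attack cycles form an i.i.d. sequence of words in S (attacker block) and H (honest block): H, SHS, SHH, or SSwH with $w$ a Dyck word; $\mathbb{P}[H]=p$, $\mathbb{P}[SHS]=pq^2$, $\mathbb{P}[SHH]=p^2q$, $\mathbb{P}[SSwH]=q^2p(pq)^{|w|}$ ($|w|$ half the length of $w$). $L(\omega)$ is the number of blocks added to the official chain during $\omega$ ($L(H)=1$, $L(SHS)=L(SHH)=2$, $L(SSwH)=|w|+2$); $\omega$ is won by the attacker if $\omega=SHS$ or $\omega$ starts with SS. Ethereum rules: an uncle is a non-official block whose parent is official; a nephew (official block) may refer an uncle at distance (height difference) at most $n_1$ ($n_1\ge 2$ an integer), and refers at most two uncles. Strategy 2B: the attacker keeps his whole fork secret and releases it all at once at the end of the attack cycle, when an honest block would reduce his advance to one block (after a single attacker block, he publishes it to compete); the attacker's fork wins in cycles starting with SS; the attacker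 refers no uncles, while honest blocks refer all available uncles. $C_n$ is the $n$-th Catalan number, $C_n(x)=\sum_{k=0}^nC_kx^k$; $\pi_0=\pi_1=0$ and $\pi_k=pq^2\bigl(\mathbf 1_{k=2}+(pq)^{k-2}C_{k-2}\bigr)$ for $k\ge2$. *)

theory Defs
  imports "HOL-Probability.Probability"
begin

text \<open>Blocks of an attack cycle: S = attacker block, H = honest block.\<close>
datatype letter = S | H

inductive dyck :: "letter list \<Rightarrow> bool" where
  dyck_Nil: "dyck []"
| dyck_step: "dyck u \<Longrightarrow> dyck v \<Longrightarrow> dyck (S # u @ H # v)"

text \<open>Probability of an attack cycle (a word); 0 for words that are not attack cycles.
  For SSwH, the half-length of w is (length w - 3) div 2.\<close>
definition cycle_prob :: "real \<Rightarrow> real \<Rightarrow> letter list \<Rightarrow> real" where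
  "cycle_prob p q w =
     (if w = [H] then p
      else if w = [S,H,S] then p * q^2
      else if w = [S,H,H] then p^2 * q
      else if (\<exists>v. dyck v \<and> w = S # S # v @ [H])
           then q^2 * p * (p*q) ^ ((length w - 3) div 2)
      else 0)"

text \<open>Number of blocks added to the official chain during a cycle.\<close>
definition cycle_len :: "letter list \<Rightarrow> nat" where
  "cycle_len w = (if w = [H] then 1
                  else if w = [S,H,S] \<or> w = [S,H,H] then 2
                  else (length w - 3) div 2 + 2)"

definition attacker_won :: "letter list \<Rightarrow> bool" where
  "attacker_won w \<longleftrightarrow> w = [S,H,S] \<or> take 2 w = [S,S]"

text \<open>State: list of distances (height difference to the next block mined on top of
  the official chain) of the uncles still waiting to be referred.
  An attacker-won cycle creates one uncle (the first honest block of the cycle, whose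
  parent is the official tip at the cycle start), at distance L from the next block;
  older pending uncles move L further away.  In an honest-won cycle the first official
  honest block refers the available uncles (at most two) and none remain pending; the attacker's block in SHH is referred inside the cycle.\<close>
definition uncle_step :: "letter list \<Rightarrow> nat list \<Rightarrow> nat list" where
  "uncle_step w st = (if attacker_won w then cycle_len w # map (\<lambda>d. d + cycle_len w) st else [])"

definition refs :: "nat \<Rightarrow> nat list \<Rightarrow> nat" where
  "refs n1 st = min 2 (length (filter (\<lambda>d. d \<le> n1) st))"

text \<open>U'(H) for the cycle at index 0: only the previous n1 cycles can contribute uncles
  within distance n1 (each cycle adds at least one block).\<close>
definition U' :: "nat \<Rightarrow> (int \<Rightarrow> 'm \<Rightarrow> letter list) \<Rightarrow> 'm \<Rightarrow> nat" where
  "U' n1 X x = refs n1 (foldl (\<lambda>st i. uncle_step (X i x) st) [] [- int n1 .. -1])"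

definition catalan :: "nat \<Rightarrow> nat" where
  "catalan n = (2*n choose n) div (n+1)"

definition catalan_poly :: "nat \<Rightarrow> real \<Rightarrow> real" where
  "catalan_poly n x = (\<Sum>k\<le>n. real (catalan k) * x^k)"

definition pi_unc :: "real \<Rightarrow> real \<Rightarrow> nat \<Rightarrow> real" where
  "pi_unc p q k = (if k < 2 then 0
     else p * q^2 * ((if k = 2 then 1 else 0) + (p*q)^(k-2) * real (catalan (k-2))))"

end

theory Submission
  imports Defs
begin

text \<open>
  Given the two attack cycles preceding an honest cycle H, the honest block refers two uncles
  exactly when both were won by the attacker and their lengths add up to at most \<open>n\<^sub>1\<close>, and
  otherwise one uncle when the last one was won with length at most \<open>n\<^sub>1\<close>; older cycles are
  too far away.  By independence the probabilities factor, and grouping attacker-won cycles by their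
  length gives \<open>\<pi>\<^sub>i\<close>: the cycles \<open>SSwH\<close> of length \<open>i\<close> are counted by the Catalan number
  \<open>C\<^bsub>i-2\<^esub>\<close>, which we obtain from the reflection principle for lattice paths.
\<close>

section \<open>Dyck words and Catalan numbers\<close>

fun dyck_from :: "nat \<Rightarrow> letter list \<Rightarrow> bool" where
  "dyck_from h [] = (h = 0)"
| "dyck_from h (S # w) = dyck_from (Suc h) w"
| "dyck_from h (H # w) = (0 < h \<and> dyck_from (h - 1) w)"

lemma dyck_from_append_dyck: "dyck u \<Longrightarrow> dyck_from h (u @ w) = dyck_from h w"
  by (induction u arbitrary: h w rule: dyck.induct) auto

lemma dyck_from_decompose:
  "(dyck_from h v \<longrightarrow> h = 0 \<longrightarrow> dyck v) \<and>
   (dyck_from h v \<longrightarrow> 0 < h \<longrightarrow> (\<exists>u w. dyck u \<and> v = u @ H # w \<and> dyck_from (h - 1) w))"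
proof (induction "length v" arbitrary: v h rule: less_induct)
  case less
  show ?case
  proof (cases v)
    case Nil
    then show ?thesis by (auto intro: dyck.intros)
  next
    case (Cons a w)
    show ?thesis
    proof (cases a)
      case H
      then show ?thesis using Cons by (auto intro: dyck.intros)
    next
      case S
      show ?thesis
      proof (intro conjI impI)
        assume "dyck_from h v" and h0: "h = 0"
        then have "dyck_from (Suc h) w" using Cons S by simp
        then obtain u w' where u: "dyck u" "w = u @ H # w'" "dyck_from h w'"
          using less[of w "Suc h"] Cons by auto
        then have "dyck w'" using less[of w' h] Cons h0 by auto
        then show "dyck v" using Cons S u by (auto intro: dyck.intros)
      next
        assume "dyck_from h v" and h0: "0 < h"
        then have "dyck_from (Suc h) w" using Cons S by simp
        then obtain u w' where u: "dyck u" "w = u @ H # w'" "dyck_from h w'"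
          using less[of w "Suc h"] Cons by auto
        then obtain u' w'' where u': "dyck u'" "w' = u' @ H # w''" "dyck_from (h - 1) w''"
          using less[of w' h] Cons h0 by auto
        have "dyck (S # u @ H # u')" using u u' by (auto intro: dyck.intros)
        then show "\<exists>u w. dyck u \<and> v = u @ H # w \<and> dyck_from (h - 1) w"
          using Cons S u u' by (intro exI[of _ "S # u @ H # u'"] exI[of _ w'']) auto
      qed
    qed
  qed
qed

lemma dyck_iff_dyck_from_0: "dyck v \<longleftrightarrow> dyck_from 0 v"
  using dyck_from_append_dyck[of v 0 "[]"] dyck_from_decompose by auto

lemma dyck_length_even: "dyck v \<Longrightarrow> even (length v)"
  by (induction rule: dyck.induct) auto

lemma finite_letter_lists_length_eq: "finite {w :: letter list. length w = n}"
  and finite_letter_lists_length_le: "finite {w :: letter list. length w \<le> n}"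
proof -
  have "(UNIV :: letter set) = {S, H}"
    using letter.exhaust by auto
  then have "finite (UNIV :: letter set)" by (metis finite.emptyI finite.insertI)
  then show "finite {w :: letter list. length w = n}" "finite {w :: letter list. length w \<le> n}"
    using finite_lists_length_eq finite_lists_length_le by force+
qed

definition card_dyck_from :: "nat \<Rightarrow> nat \<Rightarrow> nat" where
  "card_dyck_from n h = card {w. length w = n \<and> dyck_from h w}"

lemma card_dyck_from_0: "card_dyck_from 0 h = (if h = 0 then 1 else 0)"
proof -
  have "{w. length w = 0 \<and> dyck_from h w} = (if h = 0 then {[]} else {})" by auto
  then show ?thesis unfolding card_dyck_from_def by simp
qed

lemma card_dyck_from_Suc:
  "card_dyck_from (Suc n) h =
     card_dyck_from n (Suc h) + (if 0 < h then card_dyck_from n (h - 1) else 0)"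
proof -
  define up where "up = {w. length w = n \<and> dyck_from (Suc h) w}"
  define down where "down = {w. length w = n \<and> 0 < h \<and> dyck_from (h - 1) w}"
  have split: "{w. length w = Suc n \<and> dyck_from h w} = (#) S ` up \<union> (#) H ` down"
  proof (rule set_eqI)
    fix x
    show "x \<in> {w. length w = Suc n \<and> dyck_from h w} \<longleftrightarrow> x \<in> (#) S ` up \<union> (#) H ` down"
    proof (cases x)
      case (Cons a y)
      then show ?thesis unfolding up_def down_def by (cases a) auto
    qed (auto simp: up_def down_def)
  qed
  have "finite up" "finite down"
    unfolding up_def down_def by (auto intro: finite_subset[OF _ finite_letter_lists_length_eq])
  then have "card_dyck_from (Suc n) h = card ((#) S ` up) + card ((#) H ` down)"
    unfolding card_dyck_from_def split by (intro card_Un_disjoint) auto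
  also have "\<dots> = card up + card down"
    by (simp add: card_image)
  finally show ?thesis
    unfolding up_def down_def card_dyck_from_def by auto
qed

definition int_choose :: "nat \<Rightarrow> int \<Rightarrow> int" where
  "int_choose n k = (if k < 0 then 0 else int (n choose nat k))"

lemma int_choose_Suc: "int_choose (Suc n) k = int_choose n k + int_choose n (k - 1)"
proof (cases "k \<le> 0")
  case True
  then show ?thesis unfolding int_choose_def by (cases "k = 0") auto
next
  case False
  then have "nat k = Suc (nat (k - 1))" by auto
  then show ?thesis using False unfolding int_choose_def by simp
qed

text \<open>The reflection principle: paths of length \<open>n\<close> from height \<open>h\<close> down to \<open>0\<close> that dip
  below \<open>0\<close> are in bijection with paths ending at \<open>-2\<close>.\<close>
definition ballot :: "nat \<Rightarrow> nat \<Rightarrow> int" where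
  "ballot n h = (if even (n + h)
     then int_choose n ((int n - int h) div 2) - int_choose n ((int n - int h) div 2 - 1)
     else 0)"

lemma card_dyck_from_eq_ballot: "int (card_dyck_from n h) = ballot n h"
proof (induction n arbitrary: h)
  case 0
  have "(- int h) div 2 < 0" if "h \<noteq> 0" using that by linarith
  then show ?case by (auto simp add: card_dyck_from_0 ballot_def int_choose_def)
next
  case (Suc n)
  define u where "u = (int n + 1 - int h) div 2"
  show ?case
  proof (cases "even (Suc n + h)")
    case False
    then show ?thesis using Suc by (cases h) (auto simp: card_dyck_from_Suc ballot_def)
  next
    case True
    then have u2: "int n + 1 - int h = 2 * u"
      unfolding u_def by (simp add: even_of_nat_iff[symmetric])
    have up: "ballot n (Suc h) = int_choose n (u - 1) - int_choose n (u - 2)"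
    proof -
      have d: "(int n - int (Suc h)) div 2 = u - 1" using u2 by simp
      from True have "ballot n (Suc h) = int_choose n ((int n - int (Suc h)) div 2)
          - int_choose n ((int n - int (Suc h)) div 2 - 1)"
        unfolding ballot_def by simp
      also have "\<dots> = int_choose n (u - 1) - int_choose n (u - 2)"
        unfolding d by (simp add: algebra_simps)
      finally show ?thesis .
    qed
    have here: "ballot (Suc n) h = int_choose n u - int_choose n (u - 2)"
      unfolding ballot_def using True u2 by (simp add: int_choose_Suc algebra_simps)
    show ?thesis
    proof (cases "0 < h")
      case True
      have "ballot n (h - 1) = int_choose n u - int_choose n (u - 1)"
        unfolding ballot_def using \<open>even (Suc n + h)\<close> u2 True by (auto simp: algebra_simps of_nat_diff)
      then show ?thesis using True Suc up here by (simp add: card_dyck_from_Suc)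
    next
      case False
      then have n: "n = nat (2 * u - 1)" "u \<ge> 1" using u2 by auto
      have "int_choose n u = int_choose n (u - 1)"
      proof -
        have "n choose nat u = n choose (n - nat u)" using n by (intro binomial_symmetric) auto
        moreover have "n - nat u = nat (u - 1)" using n by auto
        ultimately show ?thesis unfolding int_choose_def using n by auto
      qed
      then show ?thesis using False Suc up here by (simp add: card_dyck_from_Suc)
    qed
  qed
qed

lemma catalan_Suc_eq_diff:
  "catalan (Suc k) = (2 * Suc k choose Suc k) - (2 * Suc k choose k)"
    and binomial_central_ge_pred: "(2 * Suc k choose k) \<le> (2 * Suc k choose Suc k)"
proof -
  define C where "C = 2 * Suc k choose Suc k"
  define C' where "C' = 2 * Suc k choose k"
  have id: "Suc (Suc k) * C' = Suc k * C"
    unfolding C_def C'_def by (metis Suc_times_binomial_add add_Suc mult_2)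
  then have "Suc k * C' \<le> Suc k * C" by (metis le_add2 mult_Suc)
  then have le: "C' \<le> C" using mult_le_cancel1[of "Suc k" C' C] by linarith
  then show "(2 * Suc k choose k) \<le> (2 * Suc k choose Suc k)"
    unfolding C_def C'_def .
  have "Suc (Suc k) * (C - C') = C"
    using id le by (simp add: diff_mult_distrib2 algebra_simps)
  then have "C div Suc (Suc k) = C - C'" by (metis nonzero_mult_div_cancel_left Zero_not_Suc)
  then show "catalan (Suc k) = (2 * Suc k choose Suc k) - (2 * Suc k choose k)"
    unfolding catalan_def C_def C'_def by simp
qed

lemma card_dyck_length: "card {v. dyck v \<and> length v = 2 * m} = catalan m"
proof -
  have "int (card {v. dyck v \<and> length v = 2 * m}) = ballot (2 * m) 0"
    using card_dyck_from_eq_ballot[of "2 * m" 0] dyck_iff_dyck_from_0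
    unfolding card_dyck_from_def by (metis (no_types, lifting) Collect_cong)
  also have "\<dots> = int_choose (2 * m) (int m) - int_choose (2 * m) (int m - 1)"
    unfolding ballot_def by simp
  finally have card: "int (card {v. dyck v \<and> length v = 2 * m}) = \<dots>" .
  show ?thesis
  proof (cases m)
    case 0
    then show ?thesis using card by (simp add: int_choose_def catalan_def)
  next
    case (Suc k)
    have "int m - 1 = int k" using Suc by simp
    then have "int_choose (2 * m) (int m) - int_choose (2 * m) (int m - 1)
        = int (2 * m choose m) - int (2 * m choose k)"
      unfolding int_choose_def by simp
    then show ?thesis
      using card catalan_Suc_eq_diff[of k] binomial_central_ge_pred[of k] Suc
      by (simp del: mult_Suc_right binomial_Suc_Suc add: of_nat_diff)
  qed
qed

section \<open>Cycles won by the attacker\<close>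

definition won_upto :: "nat \<Rightarrow> letter list set" where
  "won_upto n = {b. attacker_won b \<and> cycle_len b \<le> n}"

definition won_pairs :: "nat \<Rightarrow> (letter list \<times> letter list) set" where
  "won_pairs n = {(a, b). attacker_won a \<and> attacker_won b \<and> cycle_len a + cycle_len b \<le> n}"

lemma attacker_won_cases: "attacker_won b \<Longrightarrow> b = [S,H,S] \<or> (\<exists>r. b = S # S # r)"
  unfolding attacker_won_def by (cases b; simp; rename_tac a r; case_tac r; auto)

lemma cycle_len_SS: "cycle_len (S # S # r) = (length r - 1) div 2 + 2"
  unfolding cycle_len_def by auto

lemma length_le_cycle_len: "attacker_won b \<Longrightarrow> length b \<le> 2 * cycle_len b + 3"
  using attacker_won_cases[of b] by (auto simp: cycle_len_SS cycle_len_def)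

lemma finite_won_upto: "finite (won_upto n)"
  unfolding won_upto_def
  by (rule finite_subset[OF _ finite_letter_lists_length_le[of "2 * n + 3"]])
    (auto dest: length_le_cycle_len)

lemma finite_won_pairs: "finite (won_pairs n)"
  by (rule finite_subset[OF _ finite_cartesian_product[OF finite_won_upto[of n] finite_won_upto[of n]]])
    (auto simp: won_pairs_def won_upto_def)

lemma cycle_prob_H: "cycle_prob p q [H] = p"
  unfolding cycle_prob_def by simp

lemma cycle_prob_SS:
  "dyck v \<Longrightarrow> cycle_prob p q (S # S # v @ [H]) = q^2 * p * (p*q) ^ (length v div 2)"
  unfolding cycle_prob_def by auto

lemma won_of_len_support:
  assumes "attacker_won b" "cycle_len b = i" "cycle_prob p q b \<noteq> 0"
  shows "(i = 2 \<and> b = [S,H,S]) \<or>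
         (2 \<le> i \<and> (\<exists>v. dyck v \<and> length v = 2 * (i - 2) \<and> b = S # S # v @ [H]))"
proof -
  have "b = [S,H,S] \<or> (\<exists>v. dyck v \<and> b = S # S # v @ [H])"
    using assms unfolding cycle_prob_def attacker_won_def by (auto split: if_splits)
  then show ?thesis
  proof (elim disjE exE conjE)
    fix v assume v: "dyck v" "b = S # S # v @ [H]"
    have "even (length v)" using v(1) by (rule dyck_length_even)
    then show ?thesis using assms(2) v by (auto simp: cycle_len_SS)
  qed (use assms(2) in \<open>auto simp: cycle_len_def\<close>)
qed

lemma sum_cycle_prob_won_of_len:
  "(\<Sum>b\<in>{b. attacker_won b \<and> cycle_len b = i}. cycle_prob p q b) = pi_unc p q i"
proof -
  define D where "D = {v. dyck v \<and> length v = 2 * (i - 2)}"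
  define T where "T = (if 2 \<le> i then (\<lambda>v. S # S # v @ [H]) ` D else {})"
  define K where "K = (if i = 2 then {[S,H,S]} else {}) \<union> T"
  have "finite D" unfolding D_def
    by (rule finite_subset[OF _ finite_letter_lists_length_eq]) auto
  then have "finite T" "[S,H,S] \<notin> T" unfolding T_def by auto
  have "K \<subseteq> {b. attacker_won b \<and> cycle_len b = i}"
    unfolding K_def T_def D_def
    by (auto simp: attacker_won_def cycle_len_SS cycle_len_def split: if_splits)
  moreover have "\<forall>b\<in>{b. attacker_won b \<and> cycle_len b = i} - K. cycle_prob p q b = 0"
    using won_of_len_support unfolding K_def T_def D_def by fastforce
  ultimately have "(\<Sum>b\<in>{b. attacker_won b \<and> cycle_len b = i}. cycle_prob p q b)
      = (\<Sum>b\<in>K. cycle_prob p q b)"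
    using finite_won_upto[of i] unfolding won_upto_def
    by (intro sum.mono_neutral_right) (auto elim: rev_finite_subset)
  also have "\<dots> = (if i = 2 then p * q^2 else 0) + (\<Sum>b\<in>T. cycle_prob p q b)"
    using \<open>finite T\<close> \<open>[S,H,S] \<notin> T\<close> unfolding K_def by (auto simp: cycle_prob_def)
  also have "(\<Sum>b\<in>T. cycle_prob p q b)
      = (if 2 \<le> i then real (catalan (i - 2)) * (q^2 * p * (p*q) ^ (i - 2)) else 0)"
  proof (cases "2 \<le> i")
    case True
    have "(\<Sum>b\<in>T. cycle_prob p q b) = (\<Sum>v\<in>D. cycle_prob p q (S # S # v @ [H]))"
      unfolding T_def using True by (simp add: sum.reindex inj_on_def)
    also have "\<dots> = (\<Sum>v\<in>D. q^2 * p * (p*q) ^ (i - 2))"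
      by (rule sum.cong) (auto simp: D_def cycle_prob_SS)
    finally show ?thesis using True card_dyck_length[of "i - 2"] unfolding D_def by simp
  qed (simp add: T_def)
  finally show ?thesis unfolding pi_unc_def by (auto simp: algebra_simps)
qed

lemma sum_cycle_prob_won_upto:
  "(\<Sum>b\<in>won_upto n. cycle_prob p q b) = (\<Sum>i\<le>n. pi_unc p q i)"
proof -
  have "(\<Sum>b\<in>won_upto n. cycle_prob p q b)
      = (\<Sum>i\<le>n. \<Sum>b\<in>{b \<in> won_upto n. cycle_len b = i}. cycle_prob p q b)"
    using finite_won_upto[of n] by (intro sum.group[symmetric]) (auto simp: won_upto_def)
  also have "\<dots> = (\<Sum>i\<le>n. pi_unc p q i)"
    by (intro sum.cong refl)
      (auto simp: won_upto_def sum_cycle_prob_won_of_len[symmetric] intro: sum.cong)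
  finally show ?thesis .
qed

lemma sum_cycle_prob_won_pairs:
  "(\<Sum>(a, b)\<in>won_pairs n. cycle_prob p q a * cycle_prob p q b)
     = (\<Sum>i\<le>n. \<Sum>j\<le>n - i. pi_unc p q i * pi_unc p q j)"
proof -
  define W where "W i = {b. attacker_won b \<and> cycle_len b = i}" for i
  define T where "T = (SIGMA i:{..n}. {..n - i})"
  have "(\<Sum>(a, b)\<in>won_pairs n. cycle_prob p q a * cycle_prob p q b)
      = (\<Sum>ij\<in>T. \<Sum>ab\<in>{ab \<in> won_pairs n. (cycle_len (fst ab), cycle_len (snd ab)) = ij}.
           cycle_prob p q (fst ab) * cycle_prob p q (snd ab))"
    unfolding split_def
    using finite_won_pairs[of n]
    by (intro sum.group[symmetric]) (auto simp: T_def won_pairs_def)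
  also have "\<dots> = (\<Sum>(i, j)\<in>T. \<Sum>(a, b)\<in>W i \<times> W j. cycle_prob p q a * cycle_prob p q b)"
    unfolding split_def
    by (intro sum.cong refl arg_cong2[where f = sum])
      (auto simp: T_def W_def won_pairs_def)
  also have "\<dots> = (\<Sum>(i, j)\<in>T. pi_unc p q i * pi_unc p q j)"
  proof -
    have "(\<Sum>(a, b)\<in>W i \<times> W j. cycle_prob p q a * cycle_prob p q b) = pi_unc p q i * pi_unc p q j"
      for i j
      by (simp add: sum.cartesian_product' sum_product[symmetric] W_def sum_cycle_prob_won_of_len)
    then show ?thesis by simp
  qed
  also have "\<dots> = (\<Sum>i\<le>n. \<Sum>j\<le>n - i. pi_unc p q i * pi_unc p q j)"
    unfolding T_def by (subst sum.Sigma) auto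
  finally show ?thesis .
qed

lemma sum_pi_unc_atMost:
  "(\<Sum>j\<le>m. pi_unc p q j) = (if m < 2 then 0 else p*q^2 + p*q^2 * catalan_poly (m-2) (p*q))"
proof (induction m)
  case 0
  then show ?case by (simp add: pi_unc_def)
next
  case (Suc m)
  consider "m = 0" | "m = 1" | k where "m = Suc (Suc k)"
    by (metis One_nat_def not0_implies_Suc)
  then show ?case
    using Suc by cases (simp_all add: pi_unc_def catalan_poly_def catalan_def algebra_simps)
qed

lemma sum_pi_unc_minus_pairs:
  assumes "2 \<le> n"
  shows "(\<Sum>i\<le>n. pi_unc p q i) - (\<Sum>i\<le>n. \<Sum>j\<le>n-i. pi_unc p q i * pi_unc p q j) =
    (\<Sum>i=2..n-2. (1 - p*q^2 - p*q^2 * catalan_poly (n-2-i) (p*q)) * pi_unc p q i)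
      + pi_unc p q (n-1) + pi_unc p q n"
proof -
  define f where "f i = pi_unc p q i * (1 - (\<Sum>j\<le>n-i. pi_unc p q j))" for i
  obtain k where k: "n = Suc (Suc k)" using assms by (metis add_2_eq_Suc le_Suc_ex)
  have "(\<Sum>i\<le>n. pi_unc p q i) - (\<Sum>i\<le>n. \<Sum>j\<le>n-i. pi_unc p q i * pi_unc p q j) = (\<Sum>i\<le>n. f i)"
    unfolding f_def by (simp add: sum_subtractf sum_distrib_left algebra_simps)
  also have "\<dots> = (\<Sum>i\<le>k. f i) + f (Suc k) + f (Suc (Suc k))"
    unfolding k by simp
  also have "f (Suc k) = pi_unc p q (n - 1)" unfolding f_def k by (simp add: pi_unc_def)
  also have "f (Suc (Suc k)) = pi_unc p q n" unfolding f_def k by (simp add: pi_unc_def)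
  also have "(\<Sum>i\<le>k. f i) = (\<Sum>i=2..k. f i)"
    by (rule sum.mono_neutral_right) (auto simp: f_def pi_unc_def)
  also have "\<dots> = (\<Sum>i=2..n-2. (1 - p*q^2 - p*q^2 * catalan_poly (n-2-i) (p*q)) * pi_unc p q i)"
  proof (rule sum.cong)
    fix i assume "i \<in> {2..n-2}"
    then have "\<not> n - i < 2" "n - i - 2 = n - 2 - i" using k by auto
    then show "f i = (1 - p*q^2 - p*q^2 * catalan_poly (n-2-i) (p*q)) * pi_unc p q i"
      unfolding f_def sum_pi_unc_atMost by (simp add: algebra_simps)
  qed (use k in simp)
  finally show ?thesis by simp
qed

section \<open>Uncles referred after two cycles\<close>

definition refs_after :: "nat \<Rightarrow> letter list \<Rightarrow> letter list \<Rightarrow> nat" where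
  "refs_after n a b = (if (a, b) \<in> won_pairs n then 2 else if b \<in> won_upto n then 1 else 0)"

text \<open>Uncles pending before \<open>a\<close> are farther away than the one created by \<open>a\<close>, so they can
  only be within reach when two uncles are referable already.\<close>
lemma refs_uncle_step_uncle_step: "refs n (uncle_step b (uncle_step a st)) = refs_after n a b"
proof -
  have far: "filter (\<lambda>d. d \<le> n) (map (\<lambda>d. d + c) st) = []" if "n < c" for c
    using that by (induction st) auto
  show ?thesis
    unfolding refs_def uncle_step_def refs_after_def won_pairs_def won_upto_def
    using far[of "cycle_len a + cycle_len b"] by (auto simp: comp_def add.assoc)
qed

lemma U'_eq_refs_after: "2 \<le> n1 \<Longrightarrow> U' n1 X x = refs_after n1 (X (-2) x) (X (-1) x)"
proof -
  assume "2 \<le> n1"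
  then have "[- int n1 .. -1] = [- int n1 .. -3] @ [-2, -1]"
    by (simp add: upto_rec2)
  then show ?thesis
    unfolding U'_def by (simp add: refs_uncle_step_uncle_step)
qed

section \<open>Independent attack cycles\<close>

lemma (in prob_space) prob_finite_values:
  assumes "finite F" "\<And>v. {x \<in> space M. Y x = v} \<in> events"
  shows "{x \<in> space M. Y x \<in> F} \<in> events"
    and "prob {x \<in> space M. Y x \<in> F} = (\<Sum>v\<in>F. prob {x \<in> space M. Y x = v})"
proof -
  have eq: "{x \<in> space M. Y x \<in> F} = (\<Union>v\<in>F. {x \<in> space M. Y x = v})" by auto
  show "{x \<in> space M. Y x \<in> F} \<in> events"
    unfolding eq using assms by (intro sets.finite_UN) auto
  show "prob {x \<in> space M. Y x \<in> F} = (\<Sum>v\<in>F. prob {x \<in> space M. Y x = v})"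
    unfolding eq using assms
    by (intro finite_measure_finite_Union) (auto simp: disjoint_family_on_def)
qed

locale iid_attack_cycles = prob_space M for M :: "'m measure" +
  fixes X :: "int \<Rightarrow> 'm \<Rightarrow> letter list" and p q :: real
  assumes indep: "indep_vars (\<lambda>_. count_space UNIV) X UNIV"
    and prob_X_eq: "\<And>i w. prob {x \<in> space M. X i x = w} = cycle_prob p q w"
begin

lemma X_eq_event: "{x \<in> space M. X i x = w} \<in> events"
proof -
  have "random_variable (count_space UNIV) (X i)"
    using indep unfolding indep_vars_def2 by auto
  then have "X i -` {w} \<inter> space M \<in> events" by (rule measurable_sets) auto
  moreover have "X i -` {w} \<inter> space M = {x \<in> space M. X i x = w}" by auto
  ultimately show ?thesis by simp
qed

lemma prob_INT_X_eq:
  assumes "finite J" "J \<noteq> {}"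
  shows "prob (\<Inter>j\<in>J. {x \<in> space M. X j x = w j}) = (\<Prod>j\<in>J. cycle_prob p q (w j))"
proof -
  have "indep_sets (\<lambda>i. {X i -` A \<inter> space M | A. A \<in> sets (count_space UNIV)}) UNIV"
    using indep unfolding indep_vars_def2 by auto
  moreover have "\<And>j. {x \<in> space M. X j x = w j} = X j -` {w j} \<inter> space M" by auto
  ultimately have "prob (\<Inter>j\<in>J. {x \<in> space M. X j x = w j})
      = (\<Prod>j\<in>J. prob {x \<in> space M. X j x = w j})"
    using assms by (simp only:) (rule indep_setsD, auto)
  then show ?thesis by (simp add: prob_X_eq)
qed

lemma X_pair_eq_event_and_prob:
  assumes "i \<noteq> j"
  shows "{x \<in> space M. (X i x, X j x) = (a, b)} \<in> events"
    and "prob {x \<in> space M. (X i x, X j x) = (a, b)} = cycle_prob p q a * cycle_prob p q b"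
proof -
  have eq: "{x \<in> space M. (X i x, X j x) = (a, b)}
      = (\<Inter>l\<in>{i, j}. {x \<in> space M. X l x = (if l = i then a else b)})"
    using assms by auto
  show "{x \<in> space M. (X i x, X j x) = (a, b)} \<in> events"
    unfolding eq using X_eq_event by auto
  show "prob {x \<in> space M. (X i x, X j x) = (a, b)} = cycle_prob p q a * cycle_prob p q b"
    unfolding eq using assms by (subst prob_INT_X_eq) auto
qed

lemma X_triple_eq_event_and_prob:
  assumes "i \<noteq> j" "i \<noteq> k" "j \<noteq> k"
  shows "{x \<in> space M. ((X i x, X j x), X k x) = ((a, b), c)} \<in> events"
    and "prob {x \<in> space M. ((X i x, X j x), X k x) = ((a, b), c)}
           = cycle_prob p q a * cycle_prob p q b * cycle_prob p q c"
proof -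
  have eq: "{x \<in> space M. ((X i x, X j x), X k x) = ((a, b), c)}
      = (\<Inter>l\<in>{i, j, k}. {x \<in> space M. X l x = (if l = i then a else if l = j then b else c)})"
    using assms by auto
  show "{x \<in> space M. ((X i x, X j x), X k x) = ((a, b), c)} \<in> events"
    unfolding eq using X_eq_event by auto
  show "prob {x \<in> space M. ((X i x, X j x), X k x) = ((a, b), c)}
      = cycle_prob p q a * cycle_prob p q b * cycle_prob p q c"
    unfolding eq using assms by (subst prob_INT_X_eq) auto
qed

lemma prob_won_upto_then_H:
  fixes n :: nat
  defines "E \<equiv> {x \<in> space M. X (-1) x \<in> won_upto n \<and> X 0 x = [H]}"
  shows "E \<in> events" and "prob E = (\<Sum>i\<le>n. pi_unc p q i) * p"
proof -
  have E: "E = {x \<in> space M. (X (-1) x, X 0 x) \<in> won_upto n \<times> {[H]}}"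
    unfolding E_def by auto
  have fin: "finite (won_upto n \<times> {[H]})" by (simp add: finite_won_upto)
  have ev: "{x \<in> space M. (X (-1) x, X 0 x) = v} \<in> events"
    and pr: "prob {x \<in> space M. (X (-1) x, X 0 x) = v} = cycle_prob p q (fst v) * cycle_prob p q (snd v)"
    for v :: "letter list \<times> letter list"
    using X_pair_eq_event_and_prob[of "-1" 0 "fst v" "snd v"] by simp_all
  show "E \<in> events"
    unfolding E by (rule prob_finite_values(1)[OF fin ev])
  have "prob E = (\<Sum>b\<in>won_upto n. cycle_prob p q b * p)"
    unfolding E prob_finite_values(2)[OF fin ev] pr
    by (simp add: sum.cartesian_product' cycle_prob_H)
  then show "prob E = (\<Sum>i\<le>n. pi_unc p q i) * p"
    by (simp add: sum_distrib_right[symmetric] sum_cycle_prob_won_upto)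
qed

lemma prob_won_pairs_then_H:
  fixes n :: nat
  defines "E \<equiv> {x \<in> space M. (X (-2) x, X (-1) x) \<in> won_pairs n \<and> X 0 x = [H]}"
  shows "E \<in> events" and "prob E = (\<Sum>i\<le>n. \<Sum>j\<le>n - i. pi_unc p q i * pi_unc p q j) * p"
proof -
  have E: "E = {x \<in> space M. ((X (-2) x, X (-1) x), X 0 x) \<in> won_pairs n \<times> {[H]}}"
    unfolding E_def by auto
  have fin: "finite (won_pairs n \<times> {[H]})" by (simp add: finite_won_pairs)
  have ev: "{x \<in> space M. ((X (-2) x, X (-1) x), X 0 x) = v} \<in> events"
    and pr: "prob {x \<in> space M. ((X (-2) x, X (-1) x), X 0 x) = v}
      = cycle_prob p q (fst (fst v)) * cycle_prob p q (snd (fst v)) * cycle_prob p q (snd v)"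
    for v :: "(letter list \<times> letter list) \<times> letter list"
    using X_triple_eq_event_and_prob[of "-2" "-1" 0 "fst (fst v)" "snd (fst v)" "snd v"]
    by simp_all
  show "E \<in> events"
    unfolding E by (rule prob_finite_values(1)[OF fin ev])
  have "prob E = (\<Sum>(a, b)\<in>won_pairs n. cycle_prob p q a * cycle_prob p q b * p)"
    unfolding E prob_finite_values(2)[OF fin ev] pr
    by (simp add: sum.cartesian_product' cycle_prob_H split_def)
  then show "prob E = (\<Sum>i\<le>n. \<Sum>j\<le>n - i. pi_unc p q i * pi_unc p q j) * p"
    by (simp add: sum_distrib_right[symmetric] sum_cycle_prob_won_pairs[symmetric] split_def)
qed

end

theorem lemma4:
  fixes M :: "'m measure" and X :: "int \<Rightarrow> 'm \<Rightarrow> letter list"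
    and p q :: real and n1 :: nat
  assumes "prob_space M"
    and "p + q = 1" and "0 < q" and "q < p" and "2 \<le> n1"
    and "prob_space.indep_vars M (\<lambda>_. count_space UNIV) X UNIV"
    and "\<And>i w. measure M {x \<in> space M. X i x = w} = cycle_prob p q w"
  shows "\<P>(x in M. U' n1 X x = 1 \<bar> X 0 x = [H]) =
           (\<Sum>i=2..n1-2. (1 - p*q^2 - p*q^2 * catalan_poly (n1-2-i) (p*q)) * pi_unc p q i)
           + pi_unc p q (n1-1) + pi_unc p q n1 \<and>
         \<P>(x in M. U' n1 X x = 2 \<bar> X 0 x = [H]) =
           (\<Sum>i\<le>n1. \<Sum>j\<le>n1-i. pi_unc p q i * pi_unc p q j) \<and>
         \<P>(x in M. U' n1 X x \<ge> 3 \<bar> X 0 x = [H]) = 0"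
proof -
  interpret iid_attack_cycles M X p q
    using assms by (simp add: iid_attack_cycles_def iid_attack_cycles_axioms_def)
  define E1 where "E1 = {x \<in> space M. X (-1) x \<in> won_upto n1 \<and> X 0 x = [H]}"
  define E2 where "E2 = {x \<in> space M. (X (-2) x, X (-1) x) \<in> won_pairs n1 \<and> X 0 x = [H]}"
  have U': "U' n1 X x = refs_after n1 (X (-2) x) (X (-1) x)" for x
    using U'_eq_refs_after[OF \<open>2 \<le> n1\<close>] .
  have "E2 \<subseteq> E1"
    unfolding E1_def E2_def won_pairs_def won_upto_def by auto
  then have one: "prob {x \<in> space M. U' n1 X x = 1 \<and> X 0 x = [H]} = prob E1 - prob E2"
    using prob_won_upto_then_H(1) prob_won_pairs_then_H(1)
    by (subst finite_measure_Diff[symmetric])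
      (auto simp: E1_def E2_def U' refs_after_def intro: arg_cong[where f = prob])
  have two: "{x \<in> space M. U' n1 X x = 2 \<and> X 0 x = [H]} = E2"
    unfolding E2_def U' refs_after_def by auto
  have three: "{x \<in> space M. U' n1 X x \<ge> 3 \<and> X 0 x = [H]} = {}"
    unfolding U' refs_after_def by auto
  have "prob {x \<in> space M. X 0 x = [H]} = p" "p \<noteq> 0"
    using prob_X_eq cycle_prob_H assms by auto
  then show ?thesis
    unfolding cond_prob_def one two three E1_def E2_def
      prob_won_upto_then_H(2) prob_won_pairs_then_H(2)
      left_diff_distrib[symmetric] sum_pi_unc_minus_pairs[OF \<open>2 \<le> n1\<close>]
    by simp
qed

end
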